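(* Let $X$ be a Tychonoff Hausdorff $P$-space, $Y$ a Tychonoff space, $f:X\to Y$ a nearly perfect mapping, and $A\subseteq X$. Then $f|_A:A\to f(A)$ is a nearly perfect mapping onto $f(A)$ if and only if $A=f^{-1}(f(A))\cap\overline{A}$.
   Context: A space $X$ is Menger if for each sequence $(\mathcal{U}_n)$ of open covers of $X$ there is a sequence $(\mathcal{V}_n)$ with each $\mathcal{V}_n$ a finite subset of $\mathcal{U}_n$ and $\bigcup_{n}\bigcup\mathcal{V}_n=X$. A $P$-space is a space in which every countable intersection of open sets is open. A mapping $f:X\to Y$ is nearly perfect if it is a closed continuous surjection such that $f^{-1}(y)$ is Menger for every $y\in Y$. *)

theory Defs
  imports "HOL-Analysis.Analysis"
begin

definition tychonoff_space :: "'a topology \<Rightarrow> bool" where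
  "tychonoff_space X \<longleftrightarrow> completely_regular_space X \<and> t1_space X"

text \<open>P-space: every countable intersection of open sets is open
  (countable families indexed by nat, repetitions allowed).\<close>
definition p_space :: "'a topology \<Rightarrow> bool" where
  "p_space X \<longleftrightarrow> (\<forall>U :: nat \<Rightarrow> 'a set. (\<forall>n. openin X (U n)) \<longrightarrow> openin X (\<Inter>n. U n))"

definition menger_space :: "'a topology \<Rightarrow> bool" where
  "menger_space X \<longleftrightarrow>
    (\<forall>\<U> :: nat \<Rightarrow> 'a set set.
       (\<forall>n. (\<forall>U\<in>\<U> n. openin X U) \<and> topspace X \<subseteq> \<Union>(\<U> n)) \<longrightarrow>
       (\<exists>\<V> :: nat \<Rightarrow> 'a set set. (\<forall>n. finite (\<V> n) \<and> \<V> n \<subseteq> \<U> n) \<and>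
            topspace X \<subseteq> (\<Union>n. \<Union>(\<V> n))))"

definition nearly_perfect_map :: "'a topology \<Rightarrow> 'b topology \<Rightarrow> ('a \<Rightarrow> 'b) \<Rightarrow> bool" where
  "nearly_perfect_map X Y f \<longleftrightarrow>
     continuous_map X Y f \<and> closed_map X Y f \<and> f ` topspace X = topspace Y \<and>
     (\<forall>y\<in>topspace Y. menger_space (subtopology X {x \<in> topspace X. f x = y}))"

end

theory Submission
  imports Defs
begin

text \<open>In a Hausdorff P-space every Menger subspace \<open>K\<close> is closed. Separate a point \<open>x \<notin> K\<close>
  from each \<open>k \<in> K\<close> by disjoint open sets \<open>U\<^sub>k \<ni> k\<close>, \<open>V\<^sub>k \<ni> x\<close>; the Menger property covers \<open>K\<close>
  by the \<open>U\<^sub>k\<close> of countably many finite sets of indices, and the intersection of the corresponding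
  countably many finite intersections of the \<open>V\<^sub>k\<close> is an open neighbourhood of \<open>x\<close> missing \<open>K\<close>.
  So if \<open>f|A\<close> is nearly perfect, its fibres are closed in \<open>X\<close>. A point of \<open>cl A\<close> over \<open>f(A)\<close>
  but outside \<open>A\<close> can then be separated by regularity from the fibre of \<open>f|A\<close> over its image,
  and closedness of \<open>f|A\<close> yields a neighbourhood of it missing \<open>A\<close>.
  Conversely, if \<open>A = f\<^sup>-\<^sup>1(f(A)) \<inter> cl A\<close>, then \<open>f(C) = f(cl C) \<inter> f(A)\<close> for every relatively
  closed \<open>C \<subseteq> A\<close>, and the fibres of \<open>f|A\<close> are closed subsets of the Menger fibres of \<open>f\<close>.\<close>

lemma menger_space_closedin_subtopology:
  assumes menger: "menger_space X" and "closedin X C"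
  shows "menger_space (subtopology X C)"
  unfolding menger_space_def
proof (intro allI impI)
  fix \<U> :: "nat \<Rightarrow> 'a set set"
  assume cover: "\<forall>n. (\<forall>U\<in>\<U> n. openin (subtopology X C) U) \<and> topspace (subtopology X C) \<subseteq> \<Union>(\<U> n)"
  define \<U>' where "\<U>' n = {V. openin X V \<and> C \<inter> V \<in> \<U> n} \<union> {topspace X - C}" for n
  have "(\<forall>U\<in>\<U>' n. openin X U) \<and> topspace X \<subseteq> \<Union>(\<U>' n)" for n
  proof
    show "\<forall>U\<in>\<U>' n. openin X U"
      using \<open>closedin X C\<close> by (auto simp: \<U>'_def)
    show "topspace X \<subseteq> \<Union>(\<U>' n)"
    proof
      fix x assume x: "x \<in> topspace X"
      show "x \<in> \<Union>(\<U>' n)"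
      proof (cases "x \<in> C")
        case True
        then have "x \<in> topspace (subtopology X C)"
          using x by simp
        then obtain U where U: "U \<in> \<U> n" "x \<in> U"
          using cover by blast
        then obtain V where "openin X V" "U = C \<inter> V"
          using cover by (metis openin_subtopology Int_commute)
        then show ?thesis
          using U by (auto simp: \<U>'_def)
      qed (use x in \<open>auto simp: \<U>'_def\<close>)
    qed
  qed
  then obtain \<V>' where \<V>': "\<And>n. finite (\<V>' n) \<and> \<V>' n \<subseteq> \<U>' n" "topspace X \<subseteq> (\<Union>n. \<Union>(\<V>' n))"
    using menger unfolding menger_space_def by meson
  define \<V> where "\<V> n = (\<lambda>V. C \<inter> V) ` (\<V>' n - {topspace X - C})" for n
  have "finite (\<V> n) \<and> \<V> n \<subseteq> \<U> n" for n
    using \<V>'(1)[of n] by (auto simp: \<V>_def \<U>'_def)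
  moreover have "topspace (subtopology X C) \<subseteq> (\<Union>n. \<Union>(\<V> n))"
  proof
    fix x assume "x \<in> topspace (subtopology X C)"
    then have x: "x \<in> C" "x \<in> topspace X" by auto
    then obtain n V where "V \<in> \<V>' n" "x \<in> V"
      using \<V>'(2) by blast
    with x show "x \<in> (\<Union>n. \<Union>(\<V> n))"
      unfolding \<V>_def by blast
  qed
  ultimately show "\<exists>\<V>. (\<forall>n. finite (\<V> n) \<and> \<V> n \<subseteq> \<U> n) \<and> topspace (subtopology X C) \<subseteq> (\<Union>n. \<Union>(\<V> n))"
    by blast
qed

lemma menger_space_subtopology_Int_closedin:
  assumes "menger_space (subtopology X S)" and "closedin X C"
  shows "menger_space (subtopology X (S \<inter> C))"
  using menger_space_closedin_subtopology[OF assms(1) closedin_subtopology_Int_closed[OF assms(2)]]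
  by (simp add: subtopology_subtopology)

lemma Hausdorff_menger_subspace_Gdelta_separation:
  assumes "Hausdorff_space X" and menger: "menger_space (subtopology X K)"
    and "K \<subseteq> topspace X" and x: "x \<in> topspace X - K"
  obtains W :: "nat \<Rightarrow> 'a set" where "\<And>n. openin X (W n)" "\<And>n. x \<in> W n" "K \<inter> (\<Inter>n. W n) = {}"
proof -
  have "\<forall>k\<in>K. \<exists>U V. openin X U \<and> openin X V \<and> k \<in> U \<and> x \<in> V \<and> disjnt U V"
    using \<open>Hausdorff_space X\<close> \<open>K \<subseteq> topspace X\<close> x unfolding Hausdorff_space_def by blast
  then obtain U V where "\<And>k. k \<in> K \<Longrightarrow> openin X (U k) \<and> openin X (V k) \<and> k \<in> U k \<and> x \<in> V k \<and> disjnt (U k) (V k)"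
    by metis
  then have U: "\<And>k. k \<in> K \<Longrightarrow> openin X (U k) \<and> k \<in> U k"
    and V: "\<And>k. k \<in> K \<Longrightarrow> openin X (V k) \<and> x \<in> V k"
    and disjnt_UV: "\<And>k. k \<in> K \<Longrightarrow> disjnt (U k) (V k)"
    by simp_all
  let ?\<U> = "\<lambda>n::nat. (\<lambda>k. K \<inter> U k) ` K"
  have "\<forall>n. (\<forall>W\<in>?\<U> n. openin (subtopology X K) W) \<and> topspace (subtopology X K) \<subseteq> \<Union>(?\<U> n)"
    using U by (auto simp: openin_subtopology_Int2)
  then obtain \<V> where \<V>: "\<And>n. finite (\<V> n) \<and> \<V> n \<subseteq> ?\<U> n"
    and \<V>_cover: "topspace (subtopology X K) \<subseteq> (\<Union>n. \<Union>(\<V> n))"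
    using menger unfolding menger_space_def by meson
  have "\<forall>n. \<exists>F. F \<subseteq> K \<and> finite F \<and> \<V> n = (\<lambda>k. K \<inter> U k) ` F"
    using \<V> by (meson finite_subset_image)
  then obtain F where "\<And>n. F n \<subseteq> K \<and> finite (F n) \<and> \<V> n = (\<lambda>k. K \<inter> U k) ` F n"
    by metis
  then have F_sub: "\<And>n. F n \<subseteq> K" and "\<And>n. finite (F n)"
    and \<V>_eq: "\<And>n. \<V> n = (\<lambda>k. K \<inter> U k) ` F n"
    by simp_all
  define W where "W n = topspace X \<inter> (\<Inter>k\<in>F n. V k)" for n
  have "openin X (W n)" for n
    unfolding W_def using \<open>finite (F n)\<close> F_sub V by (intro openin_Int_Inter) auto
  moreover have "x \<in> W n" for n
    unfolding W_def using x F_sub V by auto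
  moreover have "K \<inter> (\<Inter>n. W n) = {}"
  proof (intro equals0I)
    fix z assume z: "z \<in> K \<inter> (\<Inter>n. W n)"
    then have "z \<in> topspace (subtopology X K)"
      by (auto simp: W_def)
    then obtain n k where k: "k \<in> F n" "z \<in> U k"
      using \<V>_cover \<V>_eq by auto
    moreover have "z \<in> V k"
      using z k(1) by (auto simp: W_def)
    ultimately show False
      using disjnt_UV F_sub unfolding disjnt_def by blast
  qed
  ultimately show thesis
    by (rule that)
qed

lemma closedin_menger_subspace_Hausdorff_p_space:
  assumes "Hausdorff_space X" and "p_space X" and "K \<subseteq> topspace X"
    and "menger_space (subtopology X K)"
  shows "closedin X K"
proof -
  have "openin X (topspace X - K)"
  proof (subst openin_subopen, intro ballI)
    fix x assume "x \<in> topspace X - K"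
    then obtain W :: "nat \<Rightarrow> 'a set" where "\<And>n. openin X (W n)" and x_in: "\<And>n. x \<in> W n"
      and disjoint: "K \<inter> (\<Inter>n. W n) = {}"
      using Hausdorff_menger_subspace_Gdelta_separation[OF assms(1,4,3)] by blast
    then have "openin X (\<Inter>n. W n)"
      using \<open>p_space X\<close> unfolding p_space_def by blast
    moreover have "(\<Inter>n. W n) \<subseteq> topspace X - K"
      using openin_subset[OF calculation] disjoint by blast
    ultimately show "\<exists>T. openin X T \<and> x \<in> T \<and> T \<subseteq> topspace X - K"
      using x_in by blast
  qed
  then show ?thesis
    using \<open>K \<subseteq> topspace X\<close> by (simp add: closedin_def)
qed

lemma fibre_subtopology_subtopology:
  assumes "A \<subseteq> topspace X"
  shows "subtopology (subtopology X A) {x \<in> topspace (subtopology X A). f x = y} =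
         subtopology X {x \<in> A. f x = y}"
proof -
  have "A \<inter> {x \<in> topspace (subtopology X A). f x = y} = {x \<in> A. f x = y}"
    using assms by auto
  then show ?thesis
    by (simp add: subtopology_subtopology)
qed

lemma closed_map_restriction:
  assumes "closed_map X Y f" and "A \<subseteq> topspace X"
    and saturated: "{x \<in> topspace X. f x \<in> f ` A} \<inter> X closure_of A \<subseteq> A"
  shows "closed_map (subtopology X A) (subtopology Y (f ` A)) f"
  unfolding closed_map_def
proof (intro allI impI)
  fix C assume "closedin (subtopology X A) C"
  then obtain D where "closedin X D" and C: "C = D \<inter> A"
    unfolding closedin_subtopology by blast
  then have "X closure_of C \<subseteq> D"
    by (simp add: closure_of_minimal)
  then have C_eq: "C = A \<inter> X closure_of C"
    using C closure_of_subset[of C X] \<open>A \<subseteq> topspace X\<close> by blast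
  have "f ` C = f ` (X closure_of C) \<inter> f ` A"
  proof
    show "f ` C \<subseteq> f ` (X closure_of C) \<inter> f ` A"
      using C_eq by blast
    show "f ` (X closure_of C) \<inter> f ` A \<subseteq> f ` C"
    proof
      fix y assume "y \<in> f ` (X closure_of C) \<inter> f ` A"
      then obtain z where z: "z \<in> X closure_of C" "f z \<in> f ` A" "y = f z"
        by blast
      have "z \<in> X closure_of A"
        using z(1) closure_of_mono[of C A X] C by blast
      moreover have "z \<in> topspace X"
        using z(1) closure_of_subset_topspace by fastforce
      ultimately have "z \<in> A"
        using saturated z(2) by blast
      then have "z \<in> C"
        using C_eq z(1) by blast
      then show "y \<in> f ` C"
        using z(3) by blast
    qed
  qed
  moreover have "closedin Y (f ` (X closure_of C))"
    using \<open>closed_map X Y f\<close> by (simp add: closed_map_def)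
  ultimately show "closedin (subtopology Y (f ` A)) (f ` C)"
    unfolding closedin_subtopology by blast
qed

lemma saturated_closure_subset_if_closed_map_restriction:
  assumes "regular_space X" and cont: "continuous_map X Y f" and "A \<subseteq> topspace X"
    and closed: "closed_map (subtopology X A) (subtopology Y (f ` A)) f"
    and fibres: "\<And>y. y \<in> f ` A \<Longrightarrow> closedin X {z \<in> A. f z = y}"
  shows "{x \<in> topspace X. f x \<in> f ` A} \<inter> X closure_of A \<subseteq> A"
proof
  fix x assume "x \<in> {x \<in> topspace X. f x \<in> f ` A} \<inter> X closure_of A"
  then have x: "x \<in> topspace X" "f x \<in> f ` A" "x \<in> X closure_of A" by auto
  show "x \<in> A"
  proof (rule ccontr)
    assume "x \<notin> A"
    define F where "F = {z \<in> A. f z = f x}"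
    have "closedin X F"
      using fibres[OF x(2)] by (simp add: F_def)
    moreover have "x \<in> topspace X - F"
      using x \<open>x \<notin> A\<close> by (auto simp: F_def)
    ultimately obtain U V where UV: "openin X U" "openin X V" "x \<in> U" "F \<subseteq> V" "disjnt U V"
      using \<open>regular_space X\<close> regular_space_def by meson
    have "closedin (subtopology X A) (A - V)"
      unfolding closedin_subtopology
      by (rule exI[of _ "topspace X - V"]) (use UV(2) \<open>A \<subseteq> topspace X\<close> in auto)
    then obtain D where D: "closedin Y D" "f ` (A - V) = D \<inter> f ` A"
      using closed unfolding closed_map_def closedin_subtopology by meson
    have "f x \<notin> f ` (A - V)"
      using UV(4) by (auto simp: F_def)
    then have "f x \<notin> D"
      using D(2) x(2) by blast
    define N where "N = {z \<in> topspace X. f z \<in> topspace Y - D} \<inter> U"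
    have "openin X N"
      unfolding N_def using D(1) UV(1)
      by (intro openin_Int openin_continuous_map_preimage[OF cont]) auto
    moreover have "x \<in> N"
      using x(1) UV(3) \<open>f x \<notin> D\<close> continuous_map_image_subset_topspace[OF cont] by (auto simp: N_def)
    ultimately obtain a where a: "a \<in> A" "a \<in> N"
      using x(3) unfolding in_closure_of by blast
    then have "a \<in> A - V"
      using UV(5) unfolding N_def disjnt_def by blast
    with a D(2) show False
      unfolding N_def by blast
  qed
qed

lemma saturated_closure_subset_if_nearly_perfect_restriction:
  assumes "regular_space X" and "Hausdorff_space X" and "p_space X"
    and cont: "continuous_map X Y f" and "A \<subseteq> topspace X"
    and restricted: "nearly_perfect_map (subtopology X A) (subtopology Y (f ` A)) f"
  shows "{x \<in> topspace X. f x \<in> f ` A} \<inter> X closure_of A \<subseteq> A"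
proof (rule saturated_closure_subset_if_closed_map_restriction[OF assms(1) cont assms(5)])
  show "closed_map (subtopology X A) (subtopology Y (f ` A)) f"
    using restricted by (simp add: nearly_perfect_map_def)
next
  have image_A: "topspace (subtopology Y (f ` A)) = f ` A"
    using continuous_map_image_subset_topspace[OF cont] \<open>A \<subseteq> topspace X\<close> by auto
  fix y assume "y \<in> f ` A"
  then have "menger_space (subtopology X {z \<in> A. f z = y})"
    using restricted
    unfolding nearly_perfect_map_def fibre_subtopology_subtopology[OF \<open>A \<subseteq> topspace X\<close>] image_A
    by blast
  then show "closedin X {z \<in> A. f z = y}"
    using assms(2,3,5) by (intro closedin_menger_subspace_Hausdorff_p_space) auto
qed

lemma nearly_perfect_map_restriction:
  assumes "nearly_perfect_map X Y f" and "A \<subseteq> topspace X"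
    and saturated: "{x \<in> topspace X. f x \<in> f ` A} \<inter> X closure_of A \<subseteq> A"
  shows "nearly_perfect_map (subtopology X A) (subtopology Y (f ` A)) f"
proof -
  have cont: "continuous_map X Y f" and closed: "closed_map X Y f"
    and fibres: "\<And>y. y \<in> topspace Y \<Longrightarrow> menger_space (subtopology X {x \<in> topspace X. f x = y})"
    using assms(1) by (auto simp: nearly_perfect_map_def)
  have topspace_A: "topspace (subtopology X A) = A"
    using assms(2) by auto
  have image_A: "topspace (subtopology Y (f ` A)) = f ` A"
    using continuous_map_image_subset_topspace[OF cont] assms(2) by auto
  have "menger_space (subtopology X {z \<in> A. f z = y})" if "y \<in> f ` A" for y
  proof -
    have "{z \<in> A. f z = y} = {x \<in> topspace X. f x = y} \<inter> X closure_of A"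
      using that saturated assms(2) closure_of_subset[OF assms(2)] by blast
    moreover have "y \<in> topspace Y"
      using that image_A by auto
    ultimately show ?thesis
      using fibres by (simp add: menger_space_subtopology_Int_closedin)
  qed
  moreover have "continuous_map (subtopology X A) (subtopology Y (f ` A)) f"
    using cont by (simp add: continuous_map_from_subtopology continuous_map_in_subtopology image_mono)
  moreover have "closed_map (subtopology X A) (subtopology Y (f ` A)) f"
    using closed assms(2) saturated by (rule closed_map_restriction)
  ultimately show ?thesis
    unfolding nearly_perfect_map_def fibre_subtopology_subtopology[OF assms(2)]
    unfolding topspace_A image_A by blast
qed

theorem theorem5p21:
  fixes X :: "'a topology" and Y :: "'b topology" and f :: "'a \<Rightarrow> 'b" and A :: "'a set"
  assumes "tychonoff_space X" and "Hausdorff_space X" and "p_space X"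
    and "tychonoff_space Y"
    and "nearly_perfect_map X Y f"
    and "A \<subseteq> topspace X"
  shows "nearly_perfect_map (subtopology X A) (subtopology Y (f ` A)) f \<longleftrightarrow>
         A = {x \<in> topspace X. f x \<in> f ` A} \<inter> X closure_of A"
proof
  assume "nearly_perfect_map (subtopology X A) (subtopology Y (f ` A)) f"
  moreover have "regular_space X"
    using assms(1) completely_regular_imp_regular_space tychonoff_space_def by blast
  moreover have "continuous_map X Y f"
    using assms(5) by (simp add: nearly_perfect_map_def)
  ultimately have "{x \<in> topspace X. f x \<in> f ` A} \<inter> X closure_of A \<subseteq> A"
    using assms(2,3,6) saturated_closure_subset_if_nearly_perfect_restriction by blast
  then show "A = {x \<in> topspace X. f x \<in> f ` A} \<inter> X closure_of A"
    using closure_of_subset[OF assms(6)] assms(6) by blast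
next
  assume "A = {x \<in> topspace X. f x \<in> f ` A} \<inter> X closure_of A"
  then have "{x \<in> topspace X. f x \<in> f ` A} \<inter> X closure_of A \<subseteq> A"
    by (rule equalityD2)
  then show "nearly_perfect_map (subtopology X A) (subtopology Y (f ` A)) f"
    by (rule nearly_perfect_map_restriction[OF assms(5,6)])
qed

end
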